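(* Let $K$ be an algebraically closed field of characteristic $p>0$, $p\neq 2$, and $n\geq 4$. Let $\Phi$ be a group automorphism of $\mathrm{Aut}_0 K[x_1,\ldots,x_n]$ which fixes every point of the standard torus (the automorphisms $x_i\mapsto\lambda_ix_i$, $\lambda_i\in K^\times$). Fix a multi-index $(i_2,\ldots,i_n)$ of nonnegative integers with $i_2+\cdots+i_n\geq 2$. For $\beta\in K^\times$ let $M=\beta x_2^{i_2}\cdots x_n^{i_n}$ and let $\varphi$ be the automorphism $x_1\mapsto x_1+M$, $x_k\mapsto x_k$ for $k=2,\ldots,n$. Then $\Phi(\varphi)$ is the automorphism $x_1\mapsto x_1+aM$, $x_k\mapsto x_k$ ($k\geq 2$), where $a\in K^\times$ is a constant depending only on the multi-index $(i_2,\ldots,i_n)$ (in particular independent of $\beta$).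
   Context: $\mathrm{Aut}_0 K[x_1,\ldots,x_n]$ is the group under composition of $K$-algebra automorphisms of $K[x_1,\ldots,x_n]$ preserving the origin, i.e. each $\varphi(x_i)$ has zero constant term. *)

theory Defs
  imports "HOL-Library.Poly_Mapping" "HOL-Computational_Algebra.Polynomial" "HOL-Algebra.Group"
begin

text \<open>Multivariate polynomials over K: finitely supported maps from monomials
 (exponent vectors nat =>0 nat) to coefficients. Variable x_i is indexed by i (we use i = 1..n).\<close>
type_synonym 'a mpoly = "(nat \<Rightarrow>\<^sub>0 nat) \<Rightarrow>\<^sub>0 'a"

definition Var :: "nat \<Rightarrow> 'a::comm_ring_1 mpoly" where
  "Var i = Poly_Mapping.single (Poly_Mapping.single i 1) 1"

definition in_vars :: "nat \<Rightarrow> 'a::zero mpoly \<Rightarrow> bool" where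
  "in_vars n p \<longleftrightarrow> (\<forall>m \<in> Poly_Mapping.keys p. Poly_Mapping.keys (m :: nat \<Rightarrow>\<^sub>0 nat) \<subseteq> {1..n})"

text \<open>A K-algebra endomorphism of K[x_1..x_n] is determined by the images of x_1..x_n;
 we represent it by sigma :: nat => mpoly with sigma i = Var i for i outside {1..n} (normalisation).\<close>

definition subst :: "(nat \<Rightarrow> 'a::comm_ring_1 mpoly) \<Rightarrow> 'a mpoly \<Rightarrow> 'a mpoly" where
  "subst \<sigma> p = (\<Sum>m\<in>Poly_Mapping.keys p. Poly_Mapping.single 0 (Poly_Mapping.lookup p m) * (\<Prod>i\<in>Poly_Mapping.keys m. \<sigma> i ^ Poly_Mapping.lookup m i))"

definition comp_end :: "(nat \<Rightarrow> 'a::comm_ring_1 mpoly) \<Rightarrow> (nat \<Rightarrow> 'a mpoly) \<Rightarrow> (nat \<Rightarrow> 'a mpoly)" where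
  "comp_end \<phi> \<psi> = (\<lambda>i. subst \<phi> (\<psi> i))"

definition End0 :: "nat \<Rightarrow> (nat \<Rightarrow> 'a::comm_ring_1 mpoly) set" where
  "End0 n = {\<sigma>. (\<forall>i\<in>{1..n}. in_vars n (\<sigma> i) \<and> Poly_Mapping.lookup (\<sigma> i) 0 = 0)
               \<and> (\<forall>i. i \<notin> {1..n} \<longrightarrow> \<sigma> i = Var i)}"

definition Aut0_set :: "nat \<Rightarrow> (nat \<Rightarrow> 'a::comm_ring_1 mpoly) set" where
  "Aut0_set n = {\<sigma> \<in> End0 n. \<exists>\<tau> \<in> End0 n. comp_end \<sigma> \<tau> = Var \<and> comp_end \<tau> \<sigma> = Var}"

definition Aut0 :: "nat \<Rightarrow> (nat \<Rightarrow> 'a::comm_ring_1 mpoly) monoid" where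
  "Aut0 n = \<lparr>carrier = Aut0_set n, mult = comp_end, one = Var\<rparr>"

definition torus :: "nat \<Rightarrow> (nat \<Rightarrow> 'a::comm_ring_1 mpoly) set" where
  "torus n = {\<sigma>. \<exists>c::nat \<Rightarrow> 'a. (\<forall>i\<in>{1..n}. c i \<noteq> 0) \<and>
      \<sigma> = (\<lambda>i. if i \<in> {1..n} then Poly_Mapping.single 0 (c i) * Var i else Var i)}"

definition elem_aut :: "(nat \<Rightarrow>\<^sub>0 nat) \<Rightarrow> 'a::comm_ring_1 \<Rightarrow> (nat \<Rightarrow> 'a mpoly)" where
  "elem_aut idx \<beta> = (\<lambda>i. if i = 1 then Var 1 + Poly_Mapping.single idx \<beta> else Var i)"

definition alg_closed :: "'a::field itself \<Rightarrow> bool" where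
  "alg_closed _ \<longleftrightarrow> (\<forall>q :: 'a poly. degree q > 0 \<longrightarrow> (\<exists>x. poly q x = 0))"

end

(* Let psi be the image of x_1 -> x_1 + x^idx.  Conjugating x_1 -> x_1 + beta x^idx by the
   diagonal automorphism diag(c) gives x_1 -> x_1 + (c^idx / c_1) beta x^idx, and since Phi fixes the
   torus it respects these relations.  For every weight w with w_1 = sum_j w_j idx_j the
   one-parameter subgroup x -> diag(x^w) centralises x_1 -> x_1 + x^idx, hence psi; over an infinite
   field this makes psi(x_i) w-homogeneous of degree w_i.  The weights idx_j e_1 + e_j (j >= 2) and
   |idx| >= 2 leave only psi(x_1) = a x_1 + b x^idx and psi(x_k) = d_k x_k.  Comparing
   psi o psi = Phi(x_1 -> x_1 + 2 x^idx) with the conjugate of psi by diag(1/2, 1, ..., 1) gives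
   d_k = d_k^2, a = a^2 and 2b = (a + 1) b, and invertibility of psi forces a = d_k = 1.
   Conjugating by diag(1/beta, 1, ..., 1) then yields Phi(x_1 -> x_1 + beta x^idx) =
   (x_1 -> x_1 + b beta x^idx). *)

theory Submission
  imports Defs
begin

abbreviation keys :: "('k \<Rightarrow>\<^sub>0 'v::zero) \<Rightarrow> 'k set" where "keys \<equiv> Poly_Mapping.keys"
abbreviation lookup :: "('k \<Rightarrow>\<^sub>0 'v::zero) \<Rightarrow> 'k \<Rightarrow> 'v" where "lookup \<equiv> Poly_Mapping.lookup"
abbreviation single :: "'k \<Rightarrow> 'v::zero \<Rightarrow> 'k \<Rightarrow>\<^sub>0 'v" where "single \<equiv> Poly_Mapping.single"

(* One_nat_def is a default simp rule; it would rewrite the exponent vectors single i 1 to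
   single i (Suc 0), which the lemmas below would then no longer match. *)
declare One_nat_def [simp del]

lemma single_eq_zero_iff [simp]: "single k v = 0 \<longleftrightarrow> v = 0"
  by (metis lookup_single_eq single_zero)

lemma lookup_single_zero_mult: "lookup (single 0 c * p) m = c * lookup p m"
  by (simp add: mult_map_scale_conv_mult[symmetric] map.rep_eq when_def)

lemma poly_mapping_eqI_on:
  assumes "keys f \<subseteq> S" "keys g \<subseteq> S" "\<And>k. k \<in> S \<Longrightarrow> lookup f k = lookup g k"
  shows "f = g"
  by (rule poly_mapping_eqI) (metis assms in_keys_iff subsetD)

lemma poly_mapping_eq_sum_single:
  assumes "finite S" "keys f \<subseteq> S"
  shows "f = (\<Sum>k\<in>S. single k (lookup f k))"
  using assms by (intro poly_mapping_eqI) (auto simp: lookup_sum lookup_single when_def in_keys_iff)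

subsection \<open>Substitution\<close>

definition monomial_subst :: "(nat \<Rightarrow> 'a::comm_ring_1 mpoly) \<Rightarrow> (nat \<Rightarrow>\<^sub>0 nat) \<Rightarrow> 'a mpoly" where
  "monomial_subst \<sigma> m = (\<Prod>i\<in>keys m. \<sigma> i ^ lookup m i)"

definition monomial_value :: "(nat \<Rightarrow> 'a::comm_ring_1) \<Rightarrow> (nat \<Rightarrow>\<^sub>0 nat) \<Rightarrow> 'a" where
  "monomial_value c m = (\<Prod>i\<in>keys m. c i ^ lookup m i)"

definition monomial_weight :: "(nat \<Rightarrow> nat) \<Rightarrow> (nat \<Rightarrow>\<^sub>0 nat) \<Rightarrow> nat" where
  "monomial_weight w m = (\<Sum>i\<in>keys m. w i * lookup m i)"

lemma subst_eq_sum_superset: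
  assumes "finite S" "keys p \<subseteq> S"
  shows "subst \<sigma> p = (\<Sum>m\<in>S. single 0 (lookup p m) * monomial_subst \<sigma> m)"
  unfolding subst_def monomial_subst_def
  by (rule sum.mono_neutral_left[OF assms]) (auto simp: in_keys_iff)

lemma subst_add: "subst \<sigma> (p + q) = subst \<sigma> p + subst \<sigma> q"
proof -
  let ?S = "keys p \<union> keys q \<union> keys (p + q)"
  have "subst \<sigma> r = (\<Sum>m\<in>?S. single 0 (lookup r m) * monomial_subst \<sigma> m)" if "r \<in> {p, q, p + q}" for r
    using that by (intro subst_eq_sum_superset) auto
  then show ?thesis
    by (simp add: lookup_add single_add distrib_right sum.distrib)
qed

lemma subst_zero [simp]: "subst \<sigma> 0 = 0"
  by (simp add: subst_def)

lemma subst_single: "subst \<sigma> (single m c) = single 0 c * monomial_subst \<sigma> m"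
  by (cases "c = 0") (simp_all add: subst_def monomial_subst_def)

lemma monomial_subst_single_one [simp]: "monomial_subst \<sigma> (single i 1) = \<sigma> i"
  by (simp add: monomial_subst_def)

lemma subst_Var: "subst \<sigma> (Var i) = \<sigma> i"
  by (simp add: Var_def subst_single)

lemma monomial_subst_scaled_vars:
  assumes "\<And>j. j \<in> keys m \<Longrightarrow> \<sigma> j = single (single j 1) (c j)"
  shows "monomial_subst \<sigma> m = single m (monomial_value c m)"
proof -
  have single_power: "single (single j 1) d ^ e = (single (single j e) (d ^ e) :: 'a mpoly)"
    for j e and d :: 'a
    by (induction e) (simp_all add: mult_single single_add[symmetric] plus_1_eq_Suc)
  have "(\<Prod>j\<in>S. \<sigma> j ^ lookup m j)
          = single (\<Sum>j\<in>S. single j (lookup m j)) (\<Prod>j\<in>S. c j ^ lookup m j)"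
    if "finite S" "S \<subseteq> keys m" for S
    using that by (induction S rule: finite_induct) (simp_all add: assms single_power mult_single)
  moreover have "(\<Sum>j\<in>keys m. single j (lookup m j)) = m"
    by (simp add: poly_mapping_eq_sum_single[symmetric])
  ultimately show ?thesis
    by (simp add: monomial_subst_def monomial_value_def)
qed

lemma monomial_value_power: "monomial_value (\<lambda>j. x ^ w j) m = x ^ monomial_weight w m"
  by (simp add: monomial_value_def monomial_weight_def power_mult[symmetric] power_sum)

lemma monomial_value_single_one [simp]: "monomial_value c (single i 1) = c i"
  by (simp add: monomial_value_def)

lemma monomial_weight_add:
  "monomial_weight (\<lambda>j. v j + w j) m = monomial_weight v m + monomial_weight w m"
  by (simp add: monomial_weight_def distrib_right sum.distrib)

lemma monomial_weight_delta:
  "monomial_weight (\<lambda>j. if j = k then a else 0) m = a * lookup m k"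
  by (simp add: monomial_weight_def if_distrib[where f = "\<lambda>x. x * _"] sum.delta in_keys_iff
           cong: if_cong)

subsection \<open>Diagonal automorphisms\<close>

definition diag_aut :: "(nat \<Rightarrow> 'a) \<Rightarrow> nat \<Rightarrow> 'a::comm_ring_1 mpoly" where
  "diag_aut c i = single (single i 1) (c i)"

lemma Var_eq_diag_aut: "Var = diag_aut (\<lambda>_. 1)"
  by (simp add: fun_eq_iff Var_def diag_aut_def)

lemma comp_end_diag_aut_right: "comp_end \<sigma> (diag_aut c) i = single 0 (c i) * \<sigma> i"
  by (simp add: comp_end_def diag_aut_def subst_single)

lemma lookup_comp_end_diag_aut_left:
  "lookup (comp_end (diag_aut c) \<sigma> i) m = lookup (\<sigma> i) m * monomial_value c m"
proof -
  have "subst (diag_aut c) p = (\<Sum>m\<in>keys p. single m (lookup p m * monomial_value c m))" for p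
    by (simp add: subst_def monomial_subst_def[symmetric] monomial_subst_scaled_vars diag_aut_def
        mult_single)
  then show ?thesis
    by (auto simp: comp_end_def lookup_sum lookup_single when_def in_keys_iff)
qed

lemma comp_end_diag_aut_right_cancel:
  fixes c :: "nat \<Rightarrow> 'a::field"
  assumes "\<And>i. c i \<noteq> 0" "comp_end \<sigma> (diag_aut c) = comp_end \<tau> (diag_aut c)"
  shows "\<sigma> = \<tau>"
proof
  fix i
  show "\<sigma> i = \<tau> i"
    using fun_cong[OF assms(2), of i] assms(1) by (simp add: comp_end_diag_aut_right)
qed

lemma diag_aut_in_torus:
  assumes "\<And>i. c i \<noteq> 0" "\<And>i. i \<notin> {1..n} \<Longrightarrow> c i = 1"
  shows "diag_aut c \<in> torus n"
  unfolding torus_def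
  by (auto intro!: exI[of _ c] simp: assms fun_eq_iff diag_aut_def Var_def mult_single)

lemma diag_aut_in_Aut0:
  fixes c :: "nat \<Rightarrow> 'a::field"
  assumes "\<And>i. c i \<noteq> 0" "\<And>i. i \<notin> {1..n} \<Longrightarrow> c i = 1"
  shows "diag_aut c \<in> carrier (Aut0 n)"
proof -
  have End0: "diag_aut d \<in> End0 n" if "\<And>i. i \<notin> {1..n} \<Longrightarrow> d i = 1" for d :: "nat \<Rightarrow> 'a"
    using that by (auto simp: End0_def diag_aut_def in_vars_def Var_def lookup_single when_def)
  have inverse: "comp_end (diag_aut d) (diag_aut d') = Var" if "\<And>i. d i * d' i = 1" for d d' :: "nat \<Rightarrow> 'a"
    using that by (simp add: fun_eq_iff comp_end_diag_aut_right diag_aut_def Var_def mult_single mult.commute)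
  show ?thesis
    unfolding Aut0_def Aut0_set_def
    using assms by (auto intro!: End0 bexI[of _ "diag_aut (\<lambda>i. inverse (c i))"] inverse)
qed

lemma Aut0_nonzero:
  assumes "\<sigma> \<in> carrier (Aut0 n)"
  shows "\<sigma> i \<noteq> 0"
proof
  assume "\<sigma> i = 0"
  obtain \<tau> where "comp_end \<tau> \<sigma> = Var"
    using assms by (auto simp: Aut0_def Aut0_set_def)
  then have "subst \<tau> (\<sigma> i) = Var i"
    by (metis comp_end_def)
  with \<open>\<sigma> i = 0\<close> show False
    by (simp add: Var_def)
qed

lemma Aut0_keys_monomial:
  assumes "\<sigma> \<in> carrier (Aut0 n)" "i \<in> {1..n}" "m \<in> keys (\<sigma> i)"
  shows "keys m \<subseteq> {1..n}"
  using assms by (auto simp: Aut0_def Aut0_set_def End0_def in_vars_def)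

lemma Aut0_outside:
  assumes "\<sigma> \<in> carrier (Aut0 n)" "i \<notin> {1..n}"
  shows "\<sigma> i = Var i"
  using assms by (auto simp: Aut0_def Aut0_set_def End0_def)

subsection \<open>Elementary automorphisms\<close>

lemma elem_aut_one [simp]: "elem_aut idx \<beta> 1 = Var 1 + single idx \<beta>"
  by (simp add: elem_aut_def)

lemma elem_aut_other [simp]: "i \<noteq> 1 \<Longrightarrow> elem_aut idx \<beta> i = Var i"
  by (simp add: elem_aut_def)

lemma elem_aut_zero: "elem_aut idx 0 = Var"
  by (simp add: fun_eq_iff elem_aut_def)

lemma monomial_subst_elem_aut:
  assumes "1 \<notin> keys idx"
  shows "monomial_subst (elem_aut idx \<beta>) idx = single idx 1"
proof -
  have "monomial_subst (elem_aut idx \<beta>) idx = single idx (monomial_value (\<lambda>_. 1) idx)"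
    by (rule monomial_subst_scaled_vars) (use assms in \<open>auto simp: Var_def elem_aut_def\<close>)
  then show ?thesis
    by (simp add: monomial_value_def)
qed

lemma comp_end_elem_aut:
  assumes "1 \<notin> keys idx"
  shows "comp_end (elem_aut idx \<beta>) (elem_aut idx \<gamma>) = elem_aut idx (\<beta> + \<gamma>)"
proof
  fix i
  show "comp_end (elem_aut idx \<beta>) (elem_aut idx \<gamma>) i = elem_aut idx (\<beta> + \<gamma>) i"
    using assms
    by (cases "i = 1") (simp_all add: comp_end_def subst_add subst_Var subst_single
        monomial_subst_elem_aut mult_single single_add add.assoc)
qed

lemma diag_aut_conj_elem_aut:
  assumes "c 1 * \<gamma> = \<beta> * monomial_value c idx"
  shows "comp_end (diag_aut c) (elem_aut idx \<beta>) = comp_end (elem_aut idx \<gamma>) (diag_aut c)"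
proof
  fix i
  have "monomial_subst (diag_aut c) idx = single idx (monomial_value c idx)"
    by (rule monomial_subst_scaled_vars) (simp add: diag_aut_def)
  then have "comp_end (diag_aut c) (elem_aut idx \<beta>) 1 = single 0 (c 1) * elem_aut idx \<gamma> 1"
    using assms
    by (simp add: comp_end_def subst_add subst_Var subst_single diag_aut_def Var_def mult_single
        distrib_left)
  then show "comp_end (diag_aut c) (elem_aut idx \<beta>) i = comp_end (elem_aut idx \<gamma>) (diag_aut c) i"
    by (cases "i = 1") (simp_all add: comp_end_diag_aut_right comp_end_def[of "diag_aut c"] subst_single
        diag_aut_def Var_def mult_single)
qed

lemma elem_aut_in_Aut0:
  assumes "keys idx \<subseteq> {2..n}" "idx \<noteq> 0"
  shows "elem_aut idx \<beta> \<in> carrier (Aut0 n)"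
proof -
  have "1 \<notin> keys idx"
    using assms(1) by auto
  then have inverse: "comp_end (elem_aut idx b) (elem_aut idx (- b)) = Var" for b :: 'a
    by (simp add: comp_end_elem_aut elem_aut_zero)
  have "in_vars n (Var i + single idx b)" if "i \<in> {1..n}" for i and b :: 'a
  proof -
    have "keys (Var i + single idx b) \<subseteq> {single i 1, idx}"
      using keys_add[of "Var i" "single idx b"] by (auto simp: Var_def split: if_splits)
    moreover have "keys m \<subseteq> {1..n}" if "m \<in> {single i 1, idx}" for m
      using that \<open>i \<in> {1..n}\<close> assms(1) by auto
    ultimately show ?thesis
      unfolding in_vars_def by blast
  qed
  then have "elem_aut idx b \<in> End0 n" for b :: 'a
    using assms
    by (auto simp: End0_def elem_aut_def in_vars_def Var_def lookup_add lookup_single when_def)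
  then show ?thesis
    unfolding Aut0_def Aut0_set_def
    using inverse[of \<beta>] inverse[of "- \<beta>"] by auto
qed

lemma comp_end_self_triangular:
  assumes "1 \<notin> keys idx"
    and first: "\<sigma> 1 = single (single 1 1) a + single idx b"
    and other: "\<And>k. k \<noteq> 1 \<Longrightarrow> \<sigma> k = single (single k 1) (d k)"
  shows "comp_end \<sigma> \<sigma> 1 = single (single 1 1) (a * a) + single idx (a * b + b * monomial_value d idx)"
    and "k \<noteq> 1 \<Longrightarrow> comp_end \<sigma> \<sigma> k = single (single k 1) (d k * d k)"
proof -
  have "monomial_subst \<sigma> idx = single idx (monomial_value d idx)"
    using assms(1) by (intro monomial_subst_scaled_vars other) auto
  then show "comp_end \<sigma> \<sigma> 1 = single (single 1 1) (a * a) + single idx (a * b + b * monomial_value d idx)"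
    by (simp add: comp_end_def first subst_add subst_single mult_single distrib_left single_add add.assoc)
  show "k \<noteq> 1 \<Longrightarrow> comp_end \<sigma> \<sigma> k = single (single k 1) (d k * d k)"
    by (simp add: comp_end_def other subst_single mult_single)
qed

subsection \<open>Weights of torus actions\<close>

lemma alg_closed_infinite:
  assumes "alg_closed TYPE('a::field)"
  shows "infinite (UNIV :: 'a set)"
proof
  assume finite: "finite (UNIV :: 'a set)"
  define P where "P = (\<Prod>x\<in>(UNIV :: 'a set). [:- x, 1:])"
  have "degree P = card (UNIV :: 'a set)"
    unfolding P_def by (subst degree_prod_eq_sum_degree) auto
  moreover have "card (UNIV :: 'a set) > 0"
    using finite by (simp add: card_gt_0_iff)
  ultimately have "degree (P + 1) > 0"
    by (subst degree_add_eq_left) auto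
  then obtain x where "poly (P + 1) x = 0"
    using assms unfolding alg_closed_def by blast
  moreover have "poly P x = 0"
    unfolding P_def poly_prod using finite by (intro prod_zero) auto
  ultimately show False
    by simp
qed

lemma power_eq_power_imp_eq:
  assumes "infinite (UNIV :: 'a::field set)" "\<And>x::'a. x \<noteq> 0 \<Longrightarrow> x ^ e = x ^ f"
  shows "e = f"
proof (rule ccontr)
  assume "e \<noteq> f"
  define q :: "'a poly" where "q = monom 1 e - monom 1 f"
  have "coeff q e = 1"
    using \<open>e \<noteq> f\<close> by (simp add: q_def coeff_monom)
  then have "q \<noteq> 0"
    by auto
  moreover have "UNIV \<subseteq> insert 0 {x. poly q x = 0}"
    using assms(2) by (auto simp: q_def poly_monom)
  ultimately show False
    using assms(1) poly_roots_finite by (metis finite_insert finite_subset)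
qed

lemma monomial_weight_eq_of_commuting_diag_aut:
  fixes \<sigma> :: "nat \<Rightarrow> 'a::field mpoly"
  assumes "infinite (UNIV :: 'a set)"
    and "\<And>x. x \<noteq> 0 \<Longrightarrow> comp_end (diag_aut (\<lambda>j. x ^ w j)) \<sigma> = comp_end \<sigma> (diag_aut (\<lambda>j. x ^ w j))"
    and "m \<in> keys (\<sigma> i)"
  shows "monomial_weight w m = w i"
proof (rule power_eq_power_imp_eq[OF assms(1)])
  fix x :: 'a
  assume "x \<noteq> 0"
  have "lookup (\<sigma> i) m * x ^ monomial_weight w m = x ^ w i * lookup (\<sigma> i) m"
    using arg_cong[OF fun_cong[OF assms(2)[OF \<open>x \<noteq> 0\<close>], of i], of "\<lambda>p. lookup p m"]
    by (simp add: lookup_comp_end_diag_aut_left comp_end_diag_aut_right lookup_single_zero_mult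
        monomial_value_power)
  then show "x ^ monomial_weight w m = x ^ w i"
    using assms(3) by (simp add: in_keys_iff mult.commute)
qed

lemma monomial_eqI:
  fixes m m' :: "nat \<Rightarrow>\<^sub>0 nat"
  assumes "keys m \<subseteq> {1..n}" "keys m' \<subseteq> {1..n}"
    and "lookup m 1 = lookup m' 1" "\<And>j. j \<in> {2..n} \<Longrightarrow> lookup m j = lookup m' j"
  shows "m = m'"
proof (rule poly_mapping_eqI_on[OF assms(1,2)])
  fix j
  assume "j \<in> {1..n}"
  then consider "j = 1" | "j \<in> {2..n}"
    by fastforce
  then show "lookup m j = lookup m' j"
    by cases (use assms(3,4) in auto)
qed

lemma monomial_eq_var_by_weights:
  fixes m idx :: "nat \<Rightarrow>\<^sub>0 nat"
  assumes "keys m \<subseteq> {1..n}" "2 \<le> (\<Sum>j\<in>{2..n}. lookup idx j)" "k \<in> {2..n}"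
    and weights: "\<And>j. j \<in> {2..n} \<Longrightarrow> lookup idx j * lookup m 1 + lookup m j = (if k = j then 1 else 0)"
  shows "m = single k 1"
proof -
  have sum_weights: "(\<Sum>j\<in>{2..n}. lookup idx j) * lookup m 1 + (\<Sum>j\<in>{2..n}. lookup m j) = 1"
    using assms(3) by (simp add: sum_distrib_right sum.distrib[symmetric] weights)
  have "lookup m 1 = 0"
  proof (rule ccontr)
    assume "lookup m 1 \<noteq> 0"
    then have "(\<Sum>j\<in>{2..n}. lookup idx j) \<le> (\<Sum>j\<in>{2..n}. lookup idx j) * lookup m 1"
      by simp
    then show False
      using sum_weights assms(2) by linarith
  qed
  then show ?thesis
    using assms(1,3) weights by (intro monomial_eqI[where n = n]) (auto simp: lookup_single when_def)
qed

lemma monomial_eq_var_or_idx_by_weights: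
  fixes m idx :: "nat \<Rightarrow>\<^sub>0 nat"
  assumes "keys m \<subseteq> {1..n}" "keys idx \<subseteq> {2..n}" "idx \<noteq> 0"
    and weights: "\<And>j. j \<in> {2..n} \<Longrightarrow> lookup idx j * lookup m 1 + lookup m j = lookup idx j"
  shows "m = single 1 1 \<or> m = idx"
proof (cases "lookup m 1")
  case 0
  have "lookup idx 1 = 0"
    using assms(2) by (auto simp: in_keys_iff)
  then have "m = idx"
    using 0 assms(1,2) weights by (intro monomial_eqI[where n = n]) auto
  then show ?thesis ..
next
  case (Suc e)
  obtain j where j: "j \<in> keys idx"
    using assms(3) by fastforce
  have "j \<in> {2..n}" "lookup idx j \<noteq> 0"
    using j assms(2) by (blast, simp add: in_keys_iff)
  then have "e = 0"
    using weights[of j] Suc by simp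
  then have "m = single 1 1"
    using Suc assms(1) weights \<open>j \<in> {2..n}\<close> by (intro monomial_eqI[where n = n]) (auto simp: lookup_single when_def)
  then show ?thesis ..
qed

subsection \<open>Automorphisms of Aut_0 fixing the torus\<close>

locale torus_fixing_iso =
  fixes n :: nat and \<Phi> :: "(nat \<Rightarrow> 'a::field mpoly) \<Rightarrow> (nat \<Rightarrow> 'a mpoly)" and idx :: "nat \<Rightarrow>\<^sub>0 nat"
  assumes iso: "\<Phi> \<in> iso (Aut0 n) (Aut0 n)"
    and fixes_torus: "\<forall>t\<in>torus n. \<Phi> t = t"
    and infinite_field: "infinite (UNIV :: 'a set)"
    and two_nonzero: "(2::'a) \<noteq> 0"
    and keys_idx: "keys idx \<subseteq> {2..n}"
    and degree_idx: "2 \<le> (\<Sum>i\<in>keys idx. lookup idx i)"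
begin

lemma comp_end_image:
  "\<sigma> \<in> carrier (Aut0 n) \<Longrightarrow> \<tau> \<in> carrier (Aut0 n) \<Longrightarrow> \<Phi> (comp_end \<sigma> \<tau>) = comp_end (\<Phi> \<sigma>) (\<Phi> \<tau>)"
  using iso by (auto simp: iso_def hom_def Aut0_def)

lemma image_in_carrier: "\<sigma> \<in> carrier (Aut0 n) \<Longrightarrow> \<Phi> \<sigma> \<in> carrier (Aut0 n)"
  using iso by (auto simp: iso_def hom_def)

lemma idx_nonzero: "idx \<noteq> 0"
  using degree_idx by auto

lemma one_notin_keys_idx: "1 \<notin> keys idx"
  using keys_idx by auto

lemma idx_ne_single_one: "idx \<noteq> single 1 1"
  using one_notin_keys_idx by auto

lemma one_le_n: "1 \<le> n"
proof -
  obtain j where "j \<in> keys idx"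
    using idx_nonzero by fastforce
  then show ?thesis
    using keys_idx by auto
qed

lemma degree_idx_range: "2 \<le> (\<Sum>j\<in>{2..n}. lookup idx j)"
  using degree_idx sum.mono_neutral_right[of "{2..n}" "keys idx" "lookup idx"] keys_idx
  by (simp add: in_keys_iff)

lemma monomial_value_idx:
  assumes "\<And>j. j \<noteq> 1 \<Longrightarrow> c j = 1"
  shows "monomial_value c idx = 1"
  unfolding monomial_value_def by (rule prod.neutral) (metis assms one_notin_keys_idx power_one)

lemma elem_aut_in_carrier: "elem_aut idx \<beta> \<in> carrier (Aut0 n)"
  using elem_aut_in_Aut0 keys_idx idx_nonzero .

lemma diag_aut_conj_image:
  assumes "\<And>i. c i \<noteq> 0" "\<And>i. i \<notin> {1..n} \<Longrightarrow> c i = 1" "c 1 * \<gamma> = \<beta> * monomial_value c idx"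
  shows "comp_end (diag_aut c) (\<Phi> (elem_aut idx \<beta>)) = comp_end (\<Phi> (elem_aut idx \<gamma>)) (diag_aut c)"
proof -
  have "diag_aut c \<in> carrier (Aut0 n)" "\<Phi> (diag_aut c) = diag_aut c"
    using assms(1,2) diag_aut_in_Aut0 diag_aut_in_torus fixes_torus by blast+
  then show ?thesis
    using diag_aut_conj_elem_aut[OF assms(3)] comp_end_image elem_aut_in_carrier by metis
qed

lemma image_weights:
  assumes "m \<in> keys (\<Phi> (elem_aut idx 1) i)" "j \<in> {2..n}"
  shows "lookup idx j * lookup m 1 + lookup m j
           = (if i = 1 then lookup idx j else 0) + (if i = j then 1 else 0)"
proof -
  \<comment> \<open>The weight idx_j e_1 + e_j gives x_1 the same weight as the monomial x^idx.\<close>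
  define w where "w = (\<lambda>k. (if k = 1 then lookup idx j else 0) + (if k = j then 1 else 0))"
  have "comp_end (diag_aut (\<lambda>k. x ^ w k)) (\<Phi> (elem_aut idx 1))
          = comp_end (\<Phi> (elem_aut idx 1)) (diag_aut (\<lambda>k. x ^ w k))" if "x \<noteq> 0" for x :: 'a
  proof (rule diag_aut_conj_image)
    show "x ^ w k \<noteq> 0" for k
      using that by simp
    show "x ^ w k = 1" if "k \<notin> {1..n}" for k
      using that assms(2) by (auto simp: w_def)
    have "lookup idx 1 = 0"
      using one_notin_keys_idx by (simp add: in_keys_iff)
    then show "x ^ w 1 * 1 = 1 * monomial_value (\<lambda>k. x ^ w k) idx"
      using assms(2) by (simp add: monomial_value_power w_def monomial_weight_add monomial_weight_delta)
  qed
  then have "monomial_weight w m = w i"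
    by (rule monomial_weight_eq_of_commuting_diag_aut[where \<sigma> = "\<Phi> (elem_aut idx 1)",
          OF infinite_field _ assms(1)])
  then show ?thesis
    using assms(2) by (simp add: w_def monomial_weight_add monomial_weight_delta)
qed

lemma image_shape:
  obtains a b d where "\<Phi> (elem_aut idx 1) 1 = single (single 1 1) a + single idx b"
    and "\<And>k. k \<noteq> 1 \<Longrightarrow> \<Phi> (elem_aut idx 1) k = single (single k 1) (d k)"
proof -
  let ?\<psi> = "\<Phi> (elem_aut idx 1)"
  note keys_monomial = Aut0_keys_monomial[OF image_in_carrier[OF elem_aut_in_carrier]]
  have "?\<psi> 1 = single (single 1 1) (lookup (?\<psi> 1) (single 1 1)) + single idx (lookup (?\<psi> 1) idx)"
  proof -
    have "m = single 1 1 \<or> m = idx" if m: "m \<in> keys (?\<psi> 1)" for m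
    proof (rule monomial_eq_var_or_idx_by_weights[where n = n])
      show "lookup idx j * lookup m 1 + lookup m j = lookup idx j" if "j \<in> {2..n}" for j
        using image_weights[OF m that] that by auto
    qed (use keys_monomial[of 1 m] m one_le_n keys_idx idx_nonzero in auto)
    then have "keys (?\<psi> 1) \<subseteq> {single 1 1, idx}"
      by blast
    with idx_ne_single_one show ?thesis
      using poly_mapping_eq_sum_single[of "{single 1 1, idx}" "?\<psi> 1"] by simp
  qed
  moreover have "?\<psi> k = single (single k 1) (lookup (?\<psi> k) (single k 1))" if "k \<noteq> 1" for k
  proof (cases "k \<in> {2..n}")
    case True
    have "m = single k 1" if m: "m \<in> keys (?\<psi> k)" for m
    proof (rule monomial_eq_var_by_weights[where n = n])
      show "lookup idx j * lookup m 1 + lookup m j = (if k = j then 1 else 0)" if "j \<in> {2..n}" for j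
        using image_weights[OF m that] True by auto
    qed (use keys_monomial[of k m] m True degree_idx_range in auto)
    then have "keys (?\<psi> k) \<subseteq> {single k 1}"
      by blast
    then show ?thesis
      using poly_mapping_eq_sum_single[of "{single k 1}" "?\<psi> k"] by simp
  next
    case False
    with that have "?\<psi> k = Var k"
      by (auto intro: Aut0_outside[OF image_in_carrier[OF elem_aut_in_carrier]])
    then show ?thesis
      by (simp add: Var_def)
  qed
  ultimately show ?thesis
    by (rule that)
qed

lemma image_doubling:
  defines "c \<equiv> \<lambda>k. if k = 1 then inverse 2 else 1"
  shows "comp_end (diag_aut c) (\<Phi> (elem_aut idx 1))
           = comp_end (comp_end (\<Phi> (elem_aut idx 1)) (\<Phi> (elem_aut idx 1))) (diag_aut c)"
proof -
  have "comp_end (diag_aut c) (\<Phi> (elem_aut idx 1)) = comp_end (\<Phi> (elem_aut idx (2::'a))) (diag_aut c)"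
    using two_nonzero one_le_n by (intro diag_aut_conj_image) (auto simp: c_def monomial_value_idx)
  moreover have "elem_aut idx (2::'a) = comp_end (elem_aut idx 1) (elem_aut idx 1)"
    using comp_end_elem_aut[OF one_notin_keys_idx, of "1::'a" 1] by (simp add: one_add_one)
  ultimately show ?thesis
    by (simp add: comp_end_image elem_aut_in_carrier)
qed

lemma image_elem_aut_one:
  obtains b where "\<Phi> (elem_aut idx 1) = elem_aut idx b"
proof -
  let ?\<psi> = "\<Phi> (elem_aut idx 1)"
  let ?c = "\<lambda>k. if k = 1 then inverse 2 else 1 :: 'a"
  obtain a b d where first: "?\<psi> 1 = single (single 1 1) a + single idx b"
    and other: "\<And>k. k \<noteq> 1 \<Longrightarrow> ?\<psi> k = single (single k 1) (d k)"
    using image_shape by blast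
  note square = comp_end_self_triangular[OF one_notin_keys_idx first other]
  have coeff: "lookup (?\<psi> i) m * monomial_value ?c m = ?c i * lookup (comp_end ?\<psi> ?\<psi> i) m" for i m
    using arg_cong[OF fun_cong[OF image_doubling, of i], of "\<lambda>p. lookup p m"]
    by (simp add: lookup_comp_end_diag_aut_left comp_end_diag_aut_right lookup_single_zero_mult)
  have d_one: "d k = 1" if "k \<noteq> 1" for k
  proof -
    have "d k = d k * d k"
      using coeff[of k "single k 1"] that by (simp add: other square(2))
    moreover have "d k \<noteq> 0"
      using Aut0_nonzero[OF image_in_carrier[OF elem_aut_in_carrier]] other[OF that] by fastforce
    ultimately show ?thesis
      by simp
  qed
  then have square_first: "comp_end ?\<psi> ?\<psi> 1 = single (single 1 1) (a * a) + single idx (a * b + b)"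
    using square(1) monomial_value_idx[OF d_one] by simp
  have "a = 1"
  proof -
    have "a * inverse 2 = inverse 2 * (a * a)" "b = inverse 2 * (a * b + b)"
      using coeff[of 1 "single 1 1"] coeff[of 1 idx] idx_ne_single_one
      by (simp_all add: first square_first lookup_add lookup_single when_def monomial_value_idx)
    \<comment> \<open>If a = 0, the second equation forces b = 0 and hence psi x_1 = 0.\<close>
    moreover have "?\<psi> 1 \<noteq> 0"
      using Aut0_nonzero[OF image_in_carrier[OF elem_aut_in_carrier]] .
    ultimately show ?thesis
      using two_nonzero first by (auto simp: field_simps)
  qed
  then have "?\<psi> = elem_aut idx b"
    using first other d_one by (auto simp: fun_eq_iff elem_aut_def Var_def)
  then show ?thesis
    by (rule that)
qed

lemma image_elem_aut:
  obtains b where "b \<noteq> 0" "\<And>\<beta>. \<beta> \<noteq> 0 \<Longrightarrow> \<Phi> (elem_aut idx \<beta>) = elem_aut idx (b * \<beta>)"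
proof -
  obtain b where b: "\<Phi> (elem_aut idx 1) = elem_aut idx b"
    by (rule image_elem_aut_one)
  have "b \<noteq> 0"
  proof
    assume "b = 0"
    have "Var \<in> torus n"
      by (simp add: Var_eq_diag_aut diag_aut_in_torus)
    with fixes_torus have "\<Phi> Var = Var"
      by blast
    with b \<open>b = 0\<close> have "\<Phi> (elem_aut idx 1) = \<Phi> (elem_aut idx 0)"
      by (simp add: elem_aut_zero)
    then have "elem_aut idx 1 = elem_aut idx (0::'a)"
      using iso elem_aut_in_carrier by (auto simp: iso_def bij_betw_def dest: inj_onD)
    then show False
      using fun_cong[of "elem_aut idx 1" "elem_aut idx 0" 1] by simp
  qed
  moreover have "\<Phi> (elem_aut idx \<beta>) = elem_aut idx (b * \<beta>)" if "\<beta> \<noteq> 0" for \<beta>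
  proof -
    define c :: "nat \<Rightarrow> 'a" where "c = (\<lambda>k. if k = 1 then inverse \<beta> else 1)"
    have "comp_end (diag_aut c) (\<Phi> (elem_aut idx 1)) = comp_end (\<Phi> (elem_aut idx \<beta>)) (diag_aut c)"
      using that one_le_n by (intro diag_aut_conj_image) (auto simp: c_def monomial_value_idx)
    moreover have "comp_end (diag_aut c) (elem_aut idx b) = comp_end (elem_aut idx (b * \<beta>)) (diag_aut c)"
      using that by (intro diag_aut_conj_elem_aut) (simp add: c_def monomial_value_idx)
    ultimately have "comp_end (\<Phi> (elem_aut idx \<beta>)) (diag_aut c) = comp_end (elem_aut idx (b * \<beta>)) (diag_aut c)"
      using b by simp
    moreover have "c k \<noteq> 0" for k
      using that by (simp add: c_def)
    ultimately show ?thesis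
      using comp_end_diag_aut_right_cancel by blast
  qed
  ultimately show ?thesis
    by (rule that)
qed

end

theorem mainTheorem3:
  fixes \<Phi> :: "(nat \<Rightarrow> 'a::field mpoly) \<Rightarrow> (nat \<Rightarrow> 'a mpoly)"
    and n p :: nat
  assumes "alg_closed TYPE('a)"
    and "prime p" and "CHAR('a) = p" and "p \<noteq> 2"
    and "n \<ge> 4"
    and "\<Phi> \<in> iso (Aut0 n) (Aut0 n)"
    and "\<forall>t \<in> torus n. \<Phi> t = t"
    and "Poly_Mapping.keys idx \<subseteq> {2..n}" and "(\<Sum>i\<in>Poly_Mapping.keys idx. Poly_Mapping.lookup idx i) \<ge> 2"
  shows "\<exists>a::'a. a \<noteq> 0 \<and> (\<forall>\<beta>. \<beta> \<noteq> 0 \<longrightarrow> \<Phi> (elem_aut idx \<beta>) = elem_aut idx (a * \<beta>))"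
proof -
  have "(2::'a) \<noteq> 0"
  proof
    assume "(2::'a) = 0"
    then have "p dvd 2"
      using assms(3) of_nat_eq_0_iff_char_dvd[of 2, where 'a = 'a] by simp
    then show False
      using assms(2,4) prime_ge_2_nat[of p] dvd_imp_le[of p 2] by linarith
  qed
  then interpret torus_fixing_iso n \<Phi> idx
    using assms alg_closed_infinite by unfold_locales auto
  obtain b where "b \<noteq> 0" "\<And>\<beta>. \<beta> \<noteq> 0 \<Longrightarrow> \<Phi> (elem_aut idx \<beta>) = elem_aut idx (b * \<beta>)"
    using image_elem_aut by blast
  then show ?thesis
    by blast
qed

end
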